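(* Let $G$ be a strongly regular graph with parameters $(n,d,1,\mu)$ (i.e. with $\lambda=1$). Let $m$ be the number of edges of $G$, let $\theta_1\ge\theta_2\ge\cdots\ge\theta_n$ be the eigenvalues of its adjacency matrix, let $n^+$ be the number of positive eigenvalues, let $\omega=\omega(G)$ be the clique number, and let $\ell=\min(n^+,\omega)$. Then \[ \theta_1^2+\theta_2^2+\cdots+\theta_\ell^2\le \frac{2m(\omega-1)}{\omega}. \]
   Context: A strongly regular graph with parameters $(n,d,\lambda,\mu)$ is a $d$-regular graph on $n$ vertices in which every pair of adjacent vertices has exactly $\lambda$ common neighbours and every pair of distinct non-adjacent vertices has exactly $\mu$ common neighbours. Here $\mu$ denotes the SRG parameter, not an eigenvalue. *)

theory Defs
  imports Jordan_Normal_Form.Char_Poly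
begin

definition simple_graph :: "nat \<Rightarrow> (nat \<Rightarrow> nat \<Rightarrow> bool) \<Rightarrow> bool" where
  "simple_graph n E \<longleftrightarrow> (\<forall>i j. E i j \<longrightarrow> i < n \<and> j < n) \<and>
     (\<forall>i j. E i j \<longrightarrow> E j i) \<and> (\<forall>i. \<not> E i i)"

definition nbrs :: "nat \<Rightarrow> (nat \<Rightarrow> nat \<Rightarrow> bool) \<Rightarrow> nat \<Rightarrow> nat set" where
  "nbrs n E v = {u. u < n \<and> E v u}"

definition strongly_regular ::
  "nat \<Rightarrow> (nat \<Rightarrow> nat \<Rightarrow> bool) \<Rightarrow> nat \<Rightarrow> nat \<Rightarrow> nat \<Rightarrow> bool" where
  "strongly_regular n E d lam mu \<longleftrightarrow> simple_graph n E \<and>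
     (\<forall>v<n. card (nbrs n E v) = d) \<and>
     (\<forall>u<n. \<forall>v<n. E u v \<longrightarrow> card (nbrs n E u \<inter> nbrs n E v) = lam) \<and>
     (\<forall>u<n. \<forall>v<n. u \<noteq> v \<and> \<not> E u v \<longrightarrow> card (nbrs n E u \<inter> nbrs n E v) = mu)"

definition num_edges :: "nat \<Rightarrow> (nat \<Rightarrow> nat \<Rightarrow> bool) \<Rightarrow> nat" where
  "num_edges n E = card {(i, j). i < j \<and> j < n \<and> E i j}"

definition adj_matrix :: "nat \<Rightarrow> (nat \<Rightarrow> nat \<Rightarrow> bool) \<Rightarrow> real mat" where
  "adj_matrix n E = mat n n (\<lambda>(i, j). if E i j then 1 else 0)"

definition is_clique :: "nat \<Rightarrow> (nat \<Rightarrow> nat \<Rightarrow> bool) \<Rightarrow> nat set \<Rightarrow> bool" where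
  "is_clique n E C \<longleftrightarrow> C \<subseteq> {0..<n} \<and> (\<forall>u\<in>C. \<forall>v\<in>C. u \<noteq> v \<longrightarrow> E u v)"

definition clique_number :: "nat \<Rightarrow> (nat \<Rightarrow> nat \<Rightarrow> bool) \<Rightarrow> nat" where
  "clique_number n E = Max (card ` {C. is_clique n E C})"

end

theory Submission
  imports Defs "Jordan_Normal_Form.Schur_Decomposition"
begin

text \<open>
  Counting walks of length two gives \<open>A\<^sup>2 = d I + A + \<mu> (J - I - A)\<close>, so every eigenvalue
  other than \<open>d\<close> is a root of \<open>x\<^sup>2 - (1 - \<mu>) x - (d - \<mu>)\<close>, and the traces give
  \<open>\<Sum> \<theta>\<^sub>i = 0\<close> and \<open>\<Sum> \<theta>\<^sub>i\<^sup>2 = n d = 2 m\<close> (via Schur triangularisation). Since \<open>\<lambda> = 1\<close>,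
  every edge lies in exactly one triangle, so \<open>\<omega> = 3\<close> (for \<open>d > 0\<close>) and the claim
  reads \<open>\<theta>\<^sub>1\<^sup>2 + \<dots> + \<theta>\<^sub>\<ell>\<^sup>2 \<le> 2 n d / 3\<close> with \<open>\<ell> \<le> 3\<close>.

  If \<open>\<mu> = 0\<close>, or the graph is \<open>K\<^sub>3\<close> (where \<open>\<mu>\<close> is vacuous), then \<open>d = 2\<close>, the spectrum lies in
  \<open>{2, -1}\<close>, and the trace condition forces exactly \<open>n / 3\<close> positive eigenvalues, so the sum
  is at most \<open>4 n / 3\<close>. Otherwise \<open>\<mu> > 0\<close>, and summing the quadratic over the spectrum
  shows that \<open>d\<close> is a simple eigenvalue; every other positive eigenvalue satisfies
  \<open>\<theta>\<^sup>2 = (1 - \<mu>) \<theta> + d - \<mu> \<le> d - \<mu>\<close>. The bound \<open>d\<^sup>2 + 2 (d - \<mu>) \<le> 2 n d / 3\<close> then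
  follows from the counting identity \<open>d (d - 2) = \<mu> (n - d - 1)\<close>.
\<close>

section \<open>Traces of powers and eigenvalues\<close>

definition mat_trace :: "'a::comm_ring_1 mat \<Rightarrow> 'a" where
  "mat_trace A = (\<Sum>i<dim_row A. A $$ (i, i))"

lemma mat_trace_mult_comm:
  fixes A B :: "'a::comm_ring_1 mat"
  assumes "A \<in> carrier_mat n m" and "B \<in> carrier_mat m n"
  shows "mat_trace (A * B) = mat_trace (B * A)"
proof -
  have "mat_trace (A * B) = (\<Sum>i<n. \<Sum>k<m. A $$ (i, k) * B $$ (k, i))"
    using assms by (simp add: mat_trace_def scalar_prod_def atLeast0LessThan)
  also have "\<dots> = (\<Sum>k<m. \<Sum>i<n. B $$ (k, i) * A $$ (i, k))"
    by (subst sum.swap) (simp add: mult.commute)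
  also have "\<dots> = mat_trace (B * A)"
    using assms by (simp add: mat_trace_def scalar_prod_def atLeast0LessThan)
  finally show ?thesis .
qed

lemma mat_trace_similar:
  fixes A B :: "'a::comm_ring_1 mat"
  assumes "similar_mat_wit A B P Q"
  shows "mat_trace A = mat_trace B"
proof -
  define n where "n = dim_row A"
  from similar_mat_witD[OF n_def assms] have B: "B \<in> carrier_mat n n"
    and P: "P \<in> carrier_mat n n" and Q: "Q \<in> carrier_mat n n"
    and QP: "Q * P = 1\<^sub>m n" and AB: "A = P * B * Q" by auto
  have "mat_trace A = mat_trace (P * (B * Q))"
    using AB B P Q by (simp add: assoc_mult_mat)
  also have "\<dots> = mat_trace (B * Q * P)"
    using B P Q by (intro mat_trace_mult_comm) auto
  also have "B * Q * P = B"
    using B P Q QP by (simp add: assoc_mult_mat)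
  finally show ?thesis .
qed

lemma upper_triangular_mult:
  fixes B C :: "'a::comm_ring_1 mat"
  assumes B: "B \<in> carrier_mat n n" and C: "C \<in> carrier_mat n n"
    and utB: "upper_triangular B" and utC: "upper_triangular C"
  shows "upper_triangular (B * C)"
    and "i < n \<Longrightarrow> (B * C) $$ (i, i) = B $$ (i, i) * C $$ (i, i)"
proof -
  have zero: "B $$ (i, k) * C $$ (k, j) = 0" if "i < n" "k < n" "k < i \<or> j < k" for i j k
    using that upper_triangularD[OF utB, of k i] upper_triangularD[OF utC, of j k] B C by auto
  show "upper_triangular (B * C)"
    using B C by (intro upper_triangularI) (auto simp: scalar_prod_def intro!: sum.neutral zero)
  show "(B * C) $$ (i, i) = B $$ (i, i) * C $$ (i, i)" if "i < n"
    using B C that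
    by (simp add: scalar_prod_def sum.remove[of _ i]) (auto intro!: sum.neutral zero)
qed

lemma upper_triangular_pow:
  fixes B :: "'a::comm_ring_1 mat"
  assumes B: "B \<in> carrier_mat n n" and ut: "upper_triangular B"
  shows "upper_triangular (B ^\<^sub>m k) \<and> (\<forall>i<n. (B ^\<^sub>m k) $$ (i, i) = B $$ (i, i) ^ k)"
proof (induction k)
  case 0
  show ?case using B by auto
next
  case (Suc k)
  have Bk: "B ^\<^sub>m k \<in> carrier_mat n n" using B by simp
  show ?case
    using Suc upper_triangular_mult[OF Bk B _ ut] by simp
qed

lemma mat_trace_pow_eq_sum_eigenvalues:
  fixes A :: "'a::conjugatable_ordered_field mat"
  assumes A: "A \<in> carrier_mat n n" and cp: "char_poly A = (\<Prod>a\<leftarrow>es. [:- a, 1:])"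
  shows "mat_trace (A ^\<^sub>m k) = (\<Sum>i<length es. es ! i ^ k)"
proof -
  obtain B P Q where "schur_decomposition A es = (B, P, Q)" by (metis prod_cases3)
  with schur_decomposition[OF A cp] have sim: "similar_mat_wit A B P Q"
    and ut: "upper_triangular B" and es: "diag_mat B = es" by auto
  have B: "B \<in> carrier_mat n n" using similar_mat_witD(5)[OF _ sim] A by auto
  have "mat_trace (A ^\<^sub>m k) = mat_trace (B ^\<^sub>m k)"
    by (rule mat_trace_similar[OF similar_mat_wit_pow[OF sim]])
  also have "\<dots> = (\<Sum>i<n. B $$ (i, i) ^ k)"
    using upper_triangular_pow[OF B ut] B by (simp add: mat_trace_def)
  also have "\<dots> = (\<Sum>i<length es. es ! i ^ k)"
    using B by (simp add: es[symmetric] diag_mat_def)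
  finally show ?thesis .
qed

lemma length_eigenvalues:
  fixes A :: "'a::comm_ring_1 mat"
  assumes "A \<in> carrier_mat n n" and "char_poly A = (\<Prod>a\<leftarrow>es. [:- a, 1:])"
  shows "length es = n"
  using degree_monic_char_poly[OF assms(1)] degree_linear_factors[of uminus es] assms(2) by simp

lemma nth_gt_if_less_length_filter_gt:
  fixes xs :: "'a::linorder list"
  assumes "sorted_wrt (\<ge>) xs" and "i < length (filter (\<lambda>x. c < x) xs)"
  shows "c < xs ! i"
proof -
  have "filter (\<lambda>x. c < x) xs = takeWhile (\<lambda>x. c < x) xs"
    using filter_equals_takeWhile_sorted_rev[of id xs c] assms(1) by (simp add: sorted_wrt_rev)
  with assms(2) show ?thesis
    by (metis nth_mem set_takeWhileD takeWhile_nth)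
qed

lemma sum_list_two_minus_one:
  fixes xs :: "real list"
  assumes "\<forall>x\<in>set xs. x = 2 \<or> x = -1"
  shows "sum_list xs = 3 * real (length (filter (\<lambda>x. 0 < x) xs)) - real (length xs)"
  using assms by (induction xs) auto

section \<open>Strongly regular graphs\<close>

locale strongly_regular_graph =
  fixes n :: nat and E :: "nat \<Rightarrow> nat \<Rightarrow> bool" and d lam mu :: nat
  assumes strongly_regular: "strongly_regular n E d lam mu"
begin

abbreviation N :: "nat \<Rightarrow> nat set" where
  "N \<equiv> nbrs n E"

abbreviation A :: "real mat" where
  "A \<equiv> adj_matrix n E"

lemma edge_less: "E i j \<Longrightarrow> i < n \<and> j < n"
  using strongly_regular unfolding strongly_regular_def simple_graph_def by blast

lemma edge_sym: "E i j \<Longrightarrow> E j i"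
  using strongly_regular unfolding strongly_regular_def simple_graph_def by blast

lemma edge_sym_iff: "E i j \<longleftrightarrow> E j i"
  using edge_sym by blast

lemma no_loop: "\<not> E i i"
  using strongly_regular unfolding strongly_regular_def simple_graph_def by blast

lemma card_nbrs: "v < n \<Longrightarrow> card (N v) = d"
  using strongly_regular unfolding strongly_regular_def by blast

lemma card_common_nbrs_adj: "E u v \<Longrightarrow> card (N u \<inter> N v) = lam"
  using strongly_regular edge_less unfolding strongly_regular_def by blast

lemma card_common_nbrs_nonadj:
  "u < n \<Longrightarrow> v < n \<Longrightarrow> u \<noteq> v \<Longrightarrow> \<not> E u v \<Longrightarrow> card (N u \<inter> N v) = mu"
  using strongly_regular unfolding strongly_regular_def by blast

lemma nbrs_eq: "N v = Collect (E v)"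
  using edge_less unfolding nbrs_def by auto

lemma nbrs_subset: "N v \<subseteq> {..<n}"
  unfolding nbrs_def by auto

lemma nbrs_less: "j \<in> N i \<Longrightarrow> j < n"
  unfolding nbrs_def by simp

lemma finite_nbrs [simp]: "finite (N v)"
  using nbrs_subset finite_subset by blast

lemma sum_nbrs: "(\<Sum>k\<in>N j. f k) = (\<Sum>k<n. if E j k then f k else 0)"
  unfolding nbrs_def by (simp add: sum.inter_filter[symmetric] lessThan_def)

lemma sum_nbrs_const_if_adj:
  "(\<Sum>j\<in>N i. if E j k then c else 0) = of_nat (card (N i \<inter> N k)) * c"
proof -
  have "N i \<inter> N k = {j \<in> N i. E j k}"
    using edge_sym by (auto simp: nbrs_eq)
  then show ?thesis
    by (simp add: sum.inter_filter[symmetric])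
qed

lemma card_common_nbrs:
  assumes "i < n" and "k < n"
  shows "real (card (N i \<inter> N k)) =
    real mu + (real d - real mu) * of_bool (k = i) + (real lam - real mu) * of_bool (E i k)"
  using assms no_loop card_nbrs card_common_nbrs_adj card_common_nbrs_nonadj[of i k] by auto

text \<open>Two-step walks, counted by the identity \<open>A\<^sup>2 = d I + \<lambda> A + \<mu> (J - I - A)\<close>.\<close>

lemma sum_walks_length_two:
  fixes w :: "nat \<Rightarrow> real"
  assumes i: "i < n"
  shows "(\<Sum>j\<in>N i. \<Sum>k\<in>N j. w k) =
    real mu * (\<Sum>k<n. w k) + (real d - real mu) * w i + (real lam - real mu) * (\<Sum>k\<in>N i. w k)"
proof -
  have "(\<Sum>j\<in>N i. \<Sum>k\<in>N j. w k) = (\<Sum>k<n. \<Sum>j\<in>N i. if E j k then w k else 0)"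
    by (simp add: sum_nbrs[where f = w] sum.swap[of _ "N i"])
  also have "\<dots> = (\<Sum>k<n. real (card (N i \<inter> N k)) * w k)"
    by (simp add: sum_nbrs_const_if_adj)
  also have "\<dots> = (\<Sum>k<n. real mu * w k + (real d - real mu) * (if k = i then w k else 0)
      + (real lam - real mu) * (if E i k then w k else 0))"
    by (intro sum.cong refl) (simp add: card_common_nbrs i algebra_simps)
  also have "\<dots> = real mu * (\<Sum>k<n. w k) + (real d - real mu) * w i
      + (real lam - real mu) * (\<Sum>k\<in>N i. w k)"
    using i by (simp add: sum.distrib sum_distrib_left[symmetric] sum_nbrs[where f = w])
  finally show ?thesis .
qed

lemma sum_sum_nbrs: "(\<Sum>i<n. \<Sum>j\<in>N i. g j) = of_nat d * (\<Sum>j<n. g j)"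
proof -
  have "(\<Sum>i<n. \<Sum>j\<in>N i. g j) = (\<Sum>i<n. \<Sum>j<n. if E i j then g j else 0)"
    by (simp add: sum_nbrs)
  also have "\<dots> = (\<Sum>j<n. \<Sum>i<n. if E i j then g j else 0)"
    by (rule sum.swap)
  also have "\<dots> = (\<Sum>j<n. \<Sum>i<n. if E j i then g j else 0)"
    by (intro sum.cong refl) (metis edge_sym_iff)
  also have "\<dots> = (\<Sum>j<n. of_nat d * g j)"
    by (simp add: sum_nbrs[symmetric] card_nbrs)
  finally show ?thesis
    by (simp add: sum_distrib_left)
qed

lemma degree_count:
  assumes "0 < n"
  shows "real d * (real d - real lam - 1) = real mu * (real n - real d - 1)"
proof -
  have "(\<Sum>j\<in>N 0. \<Sum>k\<in>N j. 1) = (\<Sum>j\<in>N 0. real d)"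
    by (intro sum.cong refl) (simp add: card_nbrs nbrs_less)
  then show ?thesis
    using sum_walks_length_two[OF assms, of "\<lambda>_. 1"] card_nbrs[OF assms] by (simp add: algebra_simps)
qed

lemma two_num_edges: "2 * num_edges n E = n * d"
proof -
  let ?P = "{(i, j). i < j \<and> j < n \<and> E i j}"
  have "(i, j) \<in> Sigma {..<n} N \<longleftrightarrow> (i, j) \<in> ?P \<union> prod.swap ` ?P" for i j
    using edge_less[of i j] edge_sym_iff[of i j] no_loop[of i]
    by (cases i j rule: linorder_cases) (auto simp: nbrs_eq image_iff)
  then have "Sigma {..<n} N = ?P \<union> prod.swap ` ?P"
    by (simp add: set_eq_iff split_paired_All)
  moreover have "finite ?P"
    by (rule finite_subset[of _ "{..<n} \<times> {..<n}"]) auto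
  moreover have "?P \<inter> prod.swap ` ?P = {}"
    by auto
  ultimately have "card (Sigma {..<n} N) = 2 * card ?P"
    by (simp add: card_Un_disjoint card_image)
  moreover have "card (Sigma {..<n} N) = n * d"
    by (simp add: card_SigmaI card_nbrs)
  ultimately show ?thesis
    unfolding num_edges_def by simp
qed

lemma closed_nbrs:
  assumes "v < n"
  shows "insert v (N v) \<subseteq> {..<n}" and "card (insert v (N v)) = d + 1"
proof -
  have "v \<notin> N v"
    using no_loop by (simp add: nbrs_eq)
  then show "insert v (N v) \<subseteq> {..<n}" and "card (insert v (N v)) = d + 1"
    using assms nbrs_subset card_nbrs[OF assms] by auto
qed

lemma degree_less:
  assumes "v < n"
  shows "d < n"
  using card_mono[OF finite_lessThan closed_nbrs(1)[OF assms]] closed_nbrs(2)[OF assms] by simp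

lemma mu_le_degree:
  assumes "d + 1 < n"
  shows "mu \<le> d"
proof -
  have "card (insert 0 (N 0)) < card {..<n}"
    using closed_nbrs(2)[of 0] assms by simp
  then have "\<not> {..<n} \<subseteq> insert 0 (N 0)"
    using card_mono[of "insert 0 (N 0)" "{..<n}"] by auto
  then obtain u where u: "u < n" "u \<noteq> 0" "u \<notin> N 0"
    by blast
  then have "mu = card (N 0 \<inter> N u)"
    using card_common_nbrs_nonadj[of 0 u] assms by (simp add: nbrs_def)
  also have "\<dots> \<le> card (N 0)"
    by (rule card_mono) auto
  finally show ?thesis
    using card_nbrs[of 0] assms by simp
qed

text \<open>In a complete graph there are no non-adjacent pairs, so \<open>\<mu>\<close> is arbitrary.\<close>

lemma strongly_regular_if_complete:
  assumes "d + 1 = n"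
  shows "strongly_regular n E d lam mu'"
proof -
  have adj: "E u v" if "u < n" and "v < n" and "u \<noteq> v" for u v
  proof -
    have "insert u (N u) = {..<n}"
      using closed_nbrs[OF \<open>u < n\<close>] assms by (intro card_subset_eq) simp_all
    then have "v \<in> insert u (N u)"
      using \<open>v < n\<close> by simp
    then show ?thesis
      using \<open>u \<noteq> v\<close> by (simp add: nbrs_def)
  qed
  have "simple_graph n E" and "\<forall>v<n. card (N v) = d"
    and "\<forall>u<n. \<forall>v<n. E u v \<longrightarrow> card (N u \<inter> N v) = lam"
    using strongly_regular unfolding strongly_regular_def by auto
  with adj show ?thesis
    unfolding strongly_regular_def by blast
qed

lemma adj_matrix_carrier: "A \<in> carrier_mat n n"
  by (simp add: adj_matrix_def)

lemma adj_mult_vec_nth: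
  assumes "v \<in> carrier_vec n" and "i < n"
  shows "(A *\<^sub>v v) $ i = (\<Sum>j\<in>N i. v $ j)"
  using assms by (auto simp: adj_matrix_def scalar_prod_def sum_nbrs atLeast0LessThan intro!: sum.cong)

lemma eigenvalue_adj_cases:
  assumes "eigenvalue A t"
  shows "t = real d \<or> t\<^sup>2 - (real lam - real mu) * t - (real d - real mu) = 0"
proof -
  obtain v where v: "v \<in> carrier_vec n" and v0: "v \<noteq> 0\<^sub>v n" and Av: "A *\<^sub>v v = t \<cdot>\<^sub>v v"
    using assms unfolding eigenvalue_def eigenvector_def by (auto simp: adj_matrix_def)
  define S where "S = (\<Sum>k<n. v $ k)"
  have sum_nbrs_v: "(\<Sum>j\<in>N i. v $ j) = t * v $ i" if "i < n" for i
    using that v arg_cong[OF Av, of "\<lambda>u. u $ i"] by (simp add: adj_mult_vec_nth)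
  have "t * S = (\<Sum>i<n. \<Sum>j\<in>N i. v $ j)"
    unfolding S_def sum_distrib_left by (simp add: sum_nbrs_v)
  also have "\<dots> = real d * S"
    unfolding S_def by (rule sum_sum_nbrs)
  finally have "t * S = real d * S" .
  show ?thesis
  proof (cases "t = real d")
    case False
    with \<open>t * S = real d * S\<close> have "S = 0"
      by simp
    obtain i where i: "i < n" and vi: "v $ i \<noteq> 0"
      using v v0 by (metis eq_vecI index_zero_vec(1,2) carrier_vecD)
    have "t\<^sup>2 * v $ i = t * (\<Sum>j\<in>N i. v $ j)"
      by (simp add: sum_nbrs_v[OF i] power2_eq_square)
    also have "\<dots> = (\<Sum>j\<in>N i. \<Sum>k\<in>N j. v $ k)"
      by (auto simp: sum_distrib_left nbrs_less sum_nbrs_v intro!: sum.cong)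
    also have "\<dots> = (real d - real mu) * v $ i + (real lam - real mu) * (t * v $ i)"
      using sum_walks_length_two[OF i] \<open>S = 0\<close> by (simp add: S_def sum_nbrs_v[OF i])
    finally have "(t\<^sup>2 - (real lam - real mu) * t - (real d - real mu)) * v $ i = 0"
      by (simp add: algebra_simps)
    with vi show ?thesis
      by simp
  qed simp
qed

lemma mat_trace_adj: "mat_trace A = 0"
  using no_loop by (simp add: mat_trace_def adj_matrix_def)

lemma mat_trace_adj_sq: "mat_trace (A ^\<^sub>m 2) = real n * real d"
proof -
  have "(A * A) $$ (i, i) = real d" if "i < n" for i
  proof -
    have "(A * A) $$ (i, i) = (\<Sum>j<n. if E i j then 1 else 0)"
      using that edge_sym_iff[of _ i]
      by (auto simp: adj_matrix_def scalar_prod_def atLeast0LessThan intro!: sum.cong)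
    also have "\<dots> = real (card (N i))"
      by (simp add: sum_nbrs[symmetric])
    finally show ?thesis
      using card_nbrs[OF that] by simp
  qed
  moreover have "A ^\<^sub>m 2 = A * A"
    using adj_matrix_carrier by (simp add: numeral_2_eq_2)
  ultimately show ?thesis
    using adj_matrix_carrier by (simp add: mat_trace_def)
qed

context
  fixes \<theta> :: "real list"
  assumes char_poly_adj: "char_poly A = (\<Prod>a\<leftarrow>\<theta>. [:- a, 1:])"
begin

lemma length_spectrum: "length \<theta> = n"
  by (rule length_eigenvalues[OF adj_matrix_carrier char_poly_adj])

lemma sum_spectrum: "(\<Sum>i<n. \<theta> ! i) = 0"
  using mat_trace_pow_eq_sum_eigenvalues[OF adj_matrix_carrier char_poly_adj, of 1]
  by (simp add: mat_trace_adj length_spectrum)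

lemma sum_sq_spectrum: "(\<Sum>i<n. (\<theta> ! i)\<^sup>2) = real n * real d"
  using mat_trace_pow_eq_sum_eigenvalues[OF adj_matrix_carrier char_poly_adj, of 2]
  by (simp add: mat_trace_adj_sq length_spectrum)

lemma spectrum_cases:
  assumes "i < n"
  shows "\<theta> ! i = real d \<or> (\<theta> ! i)\<^sup>2 - (real lam - real mu) * \<theta> ! i - (real d - real mu) = 0"
proof (rule eigenvalue_adj_cases)
  have "poly (\<Prod>a\<leftarrow>\<theta>. [:- a, 1:]) x = (\<Prod>a\<leftarrow>\<theta>. x - a)" for x
    by (induct \<theta>) (auto simp: algebra_simps)
  then show "eigenvalue A (\<theta> ! i)"
    using assms length_spectrum
    by (simp add: eigenvalue_root_char_poly[OF adj_matrix_carrier] char_poly_adj prod_list_zero_iff)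
qed

lemma spectrum_eq_0_if_edgeless:
  assumes "d = 0" and "i < n"
  shows "\<theta> ! i = 0"
  using sum_sq_spectrum assms sum_nonneg_eq_0_iff[of "{..<n}" "\<lambda>i. (\<theta> ! i)\<^sup>2"] by simp

text \<open>The quadratic \<open>q\<close> vanishes on every eigenvalue except \<open>d\<close>, while \<open>tr q(A) = \<mu> n = q(d)\<close>.\<close>

lemma card_spectrum_degree:
  assumes "0 < mu" and "0 < n"
  shows "card {i. i < n \<and> \<theta> ! i = real d} = 1"
proof -
  define q where "q t = t\<^sup>2 - (real lam - real mu) * t - (real d - real mu)" for t
  have "q (real d) = real mu * real n"
    using degree_count[OF \<open>0 < n\<close>] by (simp add: q_def power2_eq_square algebra_simps)
  then have "q (\<theta> ! i) = (if \<theta> ! i = real d then real mu * real n else 0)" if "i < n" for i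
    using spectrum_cases[OF that] by (auto simp: q_def)
  then have "(\<Sum>i<n. q (\<theta> ! i)) = real mu * real n * card {i. i < n \<and> \<theta> ! i = real d}"
    by (simp add: sum.If_cases lessThan_def Int_def)
  moreover have "(\<Sum>i<n. q (\<theta> ! i)) = real mu * real n"
    using sum_spectrum sum_sq_spectrum
    by (simp add: q_def sum_subtractf sum_distrib_left[symmetric] algebra_simps)
  ultimately show ?thesis
    using assms by simp
qed

end

end

section \<open>The case \<open>\<lambda> = 1\<close>\<close>

lemma lambda_one_degree_bound:
  fixes d mu n :: nat
  assumes "3 \<le> d" and "0 < mu" and "mu \<le> d"
    and count: "real d * (real d - 2) = real mu * (real n - real d - 1)"
  shows "(real d)\<^sup>2 + 2 * (real d - real mu) \<le> 2 * real n * real d / 3"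
proof -
  have core: "6 * real mu * (real d - real mu) \<le> real d * (real d - 2) * (2 * real d - real mu)"
  proof (cases "d = 3")
    case True
    (* integrality of mu is needed here: the inequality fails for mu = 7/4 *)
    with assms have "mu = 1 \<or> mu = 2 \<or> mu = 3"
      by auto
    with True show ?thesis
      by auto
  next
    case False
    with assms have d4: "4 \<le> real d"
      by simp
    have "6 * real mu * (real d - real mu) \<le> 3 / 2 * (real d)\<^sup>2"
      using sum_squares_ge_zero[of "real d - 2 * real mu" 0] by (simp add: power2_eq_square algebra_simps)
    also have "\<dots> \<le> real d * (real d - 2) * real d"
      using d4 by (simp add: power2_eq_square mult_right_mono)
    also have "\<dots> \<le> real d * (real d - 2) * (2 * real d - real mu)"
      using d4 \<open>mu \<le> d\<close> by (intro mult_left_mono) auto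
    finally show ?thesis .
  qed
  have "real mu * (2 * real n * real d) = 2 * real d * (real d * (real d - 2) + real mu * (real d + 1))"
    using count by (simp add: algebra_simps)
  then have "real mu * (3 * ((real d)\<^sup>2 + 2 * (real d - real mu))) \<le> real mu * (2 * real n * real d)"
    using core by (simp add: algebra_simps power2_eq_square)
  then show ?thesis
    using \<open>0 < mu\<close> by simp
qed

lemma is_cliqueD: "is_clique n E C \<Longrightarrow> u \<in> C \<Longrightarrow> v \<in> C \<Longrightarrow> u \<noteq> v \<Longrightarrow> E u v"
  unfolding is_clique_def by blast

locale strongly_regular_graph_lambda_one = strongly_regular_graph n E d 1 mu for n E d mu
begin

lemma degree_count_lambda_one:
  "0 < n \<Longrightarrow> real d * (real d - 2) = real mu * (real n - real d - 1)"
  using degree_count by simp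

lemma triangle_through_edge:
  assumes "E u v"
  obtains w where "E u w" and "E v w"
proof -
  have "card (N u \<inter> N v) = 1"
    using card_common_nbrs_adj[OF assms] .
  then obtain w where "N u \<inter> N v = {w}"
    by (auto simp: card_Suc_eq)
  then show ?thesis
    using that by (auto simp: nbrs_eq)
qed

lemma card_clique_le_3:
  assumes "is_clique n E C"
  shows "card C \<le> 3"
proof (rule ccontr)
  assume "\<not> card C \<le> 3"
  then have "card C \<noteq> 0"
    by simp
  then have "finite C" and "C \<noteq> {}"
    by (simp_all add: card_eq_0_iff)
  then obtain a where a: "a \<in> C"
    by blast
  have "card (C - {a}) \<ge> 3"
    using \<open>\<not> card C \<le> 3\<close> \<open>finite C\<close> a by simp
  then have "C - {a} \<noteq> {}"
    by (metis card.empty not_numeral_le_zero)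
  then obtain b where b: "b \<in> C - {a}"
    by blast
  have "card (C - {a} - {b}) \<ge> 2"
    using \<open>card (C - {a}) \<ge> 3\<close> \<open>finite C\<close> b by simp
  moreover have "C - {a} - {b} \<subseteq> N a \<inter> N b"
    using assms a b unfolding is_clique_def by (auto simp: nbrs_eq)
  then have "card (C - {a} - {b}) \<le> card (N a \<inter> N b)"
    by (intro card_mono) simp_all
  moreover have "E a b"
    using is_cliqueD[OF assms a] b by simp
  then have "card (N a \<inter> N b) = 1"
    by (rule card_common_nbrs_adj)
  ultimately show False
    by linarith
qed

lemma clique_number_eq_3:
  assumes "0 < n" and "0 < d"
  shows "clique_number n E = 3"
proof -
  have "N 0 \<noteq> {}"
    using card_nbrs[OF \<open>0 < n\<close>] \<open>0 < d\<close> by auto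
  then obtain v where "E 0 v"
    by (auto simp: nbrs_eq)
  then obtain w where "E 0 w" and "E v w"
    by (rule triangle_through_edge)
  have triangle: "is_clique n E {0, v, w}"
    using \<open>E 0 v\<close> \<open>E 0 w\<close> \<open>E v w\<close> edge_less edge_sym unfolding is_clique_def by auto
  have "card {0, v, w} = 3"
    using \<open>E 0 v\<close> \<open>E 0 w\<close> \<open>E v w\<close> no_loop by (metis card_3_iff)
  have "finite {C. is_clique n E C}"
    by (rule finite_subset[of _ "Pow {0..<n}"]) (auto simp: is_clique_def)
  then have "finite (card ` {C. is_clique n E C})"
    by (rule finite_imageI)
  then show ?thesis
    unfolding clique_number_def
  proof (rule Max_eqI)
    show "k \<le> 3" if "k \<in> card ` {C. is_clique n E C}" for k
      using that card_clique_le_3 by blast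
    show "3 \<in> card ` {C. is_clique n E C}"
      using triangle \<open>card {0, v, w} = 3\<close> by (metis (mono_tags) image_eqI mem_Collect_eq)
  qed
qed

context
  fixes \<theta> :: "real list"
  assumes char_poly_adj: "char_poly A = (\<Prod>a\<leftarrow>\<theta>. [:- a, 1:])"
begin

lemma sum_list_spectrum: "sum_list \<theta> = 0"
  using sum_spectrum[OF char_poly_adj] length_spectrum[OF char_poly_adj]
  by (simp add: sum_list_sum_nth atLeast0LessThan)

lemma spectrum_triangles:
  assumes "0 < n" and "0 < d" and "mu = 0 \<or> d + 1 = n"
  shows "d = 2" and "\<forall>a\<in>set \<theta>. a = 2 \<or> a = -1"
proof -
  have "strongly_regular n E d 1 0"
    using assms(3) strongly_regular strongly_regular_if_complete by auto
  then interpret triangles: strongly_regular_graph_lambda_one n E d 0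
    by unfold_locales
  have "real d * (real d - 2) = 0"
    using triangles.degree_count_lambda_one[OF \<open>0 < n\<close>] by simp
  then show "d = 2"
    using \<open>0 < d\<close> by simp
  have "\<theta> ! i = 2 \<or> \<theta> ! i = -1" if "i < n" for i
  proof -
    have "\<theta> ! i = 2 \<or> (\<theta> ! i - 2) * (\<theta> ! i + 1) = 0"
      using triangles.spectrum_cases[OF char_poly_adj that] \<open>d = 2\<close>
      by (simp add: algebra_simps power2_eq_square)
    then show ?thesis
      by auto
  qed
  then show "\<forall>a\<in>set \<theta>. a = 2 \<or> a = -1"
    using length_spectrum[OF char_poly_adj] by (metis in_set_conv_nth)
qed

lemma sum_sq_top_spectrum_triangles:
  assumes "sorted_wrt (\<ge>) \<theta>" and "0 < n" and "0 < d" and "mu = 0 \<or> d + 1 = n"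
  shows "(\<Sum>i<min (length (filter (\<lambda>x. 0 < x) \<theta>)) 3. (\<theta> ! i)\<^sup>2) \<le> 2 * real n * real d / 3"
proof -
  let ?p = "length (filter (\<lambda>x. 0 < x) \<theta>)"
  note spectrum = spectrum_triangles[OF assms(2-4)]
  have "3 * real ?p = real n"
    using sum_list_two_minus_one[OF spectrum(2)] sum_list_spectrum length_spectrum[OF char_poly_adj]
    by simp
  have "\<theta> ! i = 2" if "i < ?p" for i
  proof -
    have "0 < \<theta> ! i"
      using nth_gt_if_less_length_filter_gt[OF assms(1) that] .
    moreover have "i < length \<theta>"
      using less_le_trans[OF that length_filter_le] .
    ultimately show ?thesis
      using spectrum(2) nth_mem by force
  qed
  then have "(\<Sum>i<min ?p 3. (\<theta> ! i)\<^sup>2) = 4 * real (min ?p 3)"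
    by simp
  also have "\<dots> \<le> 4 * real ?p"
    by simp
  also have "\<dots> = 2 * real n * real d / 3"
    using \<open>3 * real ?p = real n\<close> spectrum(1) by simp
  finally show ?thesis .
qed

lemma sum_sq_top_spectrum_connected:
  assumes "sorted_wrt (\<ge>) \<theta>" and "0 < mu" and "d + 1 < n"
  shows "(\<Sum>i<min (length (filter (\<lambda>x. 0 < x) \<theta>)) 3. (\<theta> ! i)\<^sup>2)
    \<le> (real d)\<^sup>2 + 2 * (real d - real mu)"
proof -
  let ?l = "min (length (filter (\<lambda>x. 0 < x) \<theta>)) 3"
  let ?c = "real d - real mu"
  have "mu \<le> d"
    using mu_le_degree[OF assms(3)] .
  have "?l \<le> n"
    using length_filter_le[of "\<lambda>x. 0 < x" \<theta>] length_spectrum[OF char_poly_adj] by simp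
  have bound: "(\<theta> ! i)\<^sup>2 \<le> ?c + (if \<theta> ! i = real d then (real d)\<^sup>2 - ?c else 0)" if "i < ?l" for i
  proof (cases "\<theta> ! i = real d")
    case False
    have "0 < \<theta> ! i"
      using nth_gt_if_less_length_filter_gt[OF assms(1)] that by simp
    moreover have "(\<theta> ! i)\<^sup>2 = (1 - real mu) * \<theta> ! i + ?c"
      using spectrum_cases[OF char_poly_adj, of i] that \<open>?l \<le> n\<close> False by simp
    ultimately show ?thesis
      using False assms(2) by (simp add: mult_nonpos_nonneg)
  qed simp
  have "card {i. i < ?l \<and> \<theta> ! i = real d} \<le> card {i. i < n \<and> \<theta> ! i = real d}"
    using \<open>?l \<le> n\<close> by (intro card_mono) auto
  then have multiplicity: "card {i. i < ?l \<and> \<theta> ! i = real d} \<le> 1"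
    using card_spectrum_degree[OF char_poly_adj assms(2)] assms(3) by simp
  have "(\<Sum>i<?l. (\<theta> ! i)\<^sup>2) \<le> (\<Sum>i<?l. ?c + (if \<theta> ! i = real d then (real d)\<^sup>2 - ?c else 0))"
    by (intro sum_mono bound) simp
  also have "\<dots> = real ?l * ?c + (\<Sum>i<?l. if \<theta> ! i = real d then (real d)\<^sup>2 - ?c else 0)"
    by (simp add: sum.distrib)
  also have "\<dots> = real ?l * ?c + card {i. i < ?l \<and> \<theta> ! i = real d} * ((real d)\<^sup>2 - ?c)"
    by (simp add: sum.inter_filter[symmetric])
  also have "\<dots> \<le> 3 * ?c + 1 * ((real d)\<^sup>2 - ?c)"
  proof (rule add_mono)
    show "real ?l * ?c \<le> 3 * ?c"
      using \<open>mu \<le> d\<close> by (intro mult_right_mono) auto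
    have "real d \<le> (real d)\<^sup>2"
      by (metis le_square of_nat_le_iff of_nat_mult power2_eq_square)
    then have "0 \<le> (real d)\<^sup>2 - ?c"
      using of_nat_0_le_iff[of mu] by linarith
    then show "card {i. i < ?l \<and> \<theta> ! i = real d} * ((real d)\<^sup>2 - ?c) \<le> 1 * ((real d)\<^sup>2 - ?c)"
      using multiplicity by (intro mult_right_mono) simp_all
  qed
  finally show ?thesis
    by simp
qed

lemma sum_sq_top_spectrum_le:
  assumes "sorted_wrt (\<ge>) \<theta>" and "0 < n" and "0 < d"
  shows "(\<Sum>i<min (length (filter (\<lambda>x. 0 < x) \<theta>)) 3. (\<theta> ! i)\<^sup>2) \<le> 2 * real n * real d / 3"
proof (cases "mu = 0 \<or> d + 1 = n")
  case True
  then show ?thesis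
    using sum_sq_top_spectrum_triangles assms by blast
next
  case False
  with degree_less[OF \<open>0 < n\<close>] have "0 < mu" and "d + 1 < n"
    by auto
  have count: "real d * (real d - 2) = real mu * (real n - real d - 1)"
    using degree_count_lambda_one[OF \<open>0 < n\<close>] .
  have "3 \<le> d"
  proof (rule ccontr)
    assume "\<not> 3 \<le> d"
    then have "real d * (real d - 2) \<le> 0"
      using \<open>0 < d\<close> by (auto simp: mult_nonneg_nonpos of_nat_less_iff[symmetric] less_Suc_eq)
    moreover have "0 < real mu * (real n - real d - 1)"
      using \<open>0 < mu\<close> \<open>d + 1 < n\<close> by simp
    ultimately show False
      using count by simp
  qed
  then show ?thesis
    using sum_sq_top_spectrum_connected[OF assms(1) \<open>0 < mu\<close> \<open>d + 1 < n\<close>]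
      lambda_one_degree_bound[OF \<open>3 \<le> d\<close> \<open>0 < mu\<close> mu_le_degree[OF \<open>d + 1 < n\<close>] count]
    by linarith
qed

end

end

theorem mainTheorem5:
  fixes n d mu :: nat and E :: "nat \<Rightarrow> nat \<Rightarrow> bool" and \<theta> :: "real list"
  assumes "strongly_regular n E d 1 mu"
    and "length \<theta> = n"
    and "sorted_wrt (\<ge>) \<theta>"
    and "char_poly (adj_matrix n E) = (\<Prod>a\<leftarrow>\<theta>. [:- a, 1:])"
  shows "(let m = num_edges n E; \<omega> = clique_number n E;
              npos = length (filter (\<lambda>x. x > 0) \<theta>);
              l = min npos \<omega>
          in (\<Sum>i<l. (\<theta> ! i)^2) \<le> 2 * real m * (real \<omega> - 1) / real \<omega>)"
proof -
  interpret strongly_regular_graph_lambda_one n E d mu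
    by unfold_locales (rule assms(1))
  have edges: "2 * real (num_edges n E) = real n * real d"
    using two_num_edges by (metis of_nat_mult of_nat_numeral)
  show ?thesis
  proof (cases "0 < n \<and> 0 < d")
    case True
    then show ?thesis
      using clique_number_eq_3 sum_sq_top_spectrum_le[OF assms(4,3)] edges by (simp add: Let_def)
  next
    case False
    then have "\<theta> ! i = 0" if "i < length \<theta>" for i
      using spectrum_eq_0_if_edgeless[OF assms(4)] that assms(2) by auto
    then have "filter (\<lambda>x. x > 0) \<theta> = []"
      by (auto simp: filter_empty_conv in_set_conv_nth)
    then show ?thesis
      using False edges by (auto simp: Let_def)
  qed
qed

end
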